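(* Let $X$ and $Y$ be topological spaces, let $f: X \to X$ and $g: Y \to Y$ be maps, and let $\Phi: X \to \mathbb{R}^n$ and $\Psi: Y \to \mathbb{R}^n$ be probe functions. Suppose $h: X \to Y$ is continuous and surjective with $h \circ f = g \circ h$, and that $h$ is descriptively continuous. If the set of descriptive periodic objects of $f$ (with respect to $\Phi$) is dense in $X$, then the set of descriptive periodic objects of $g$ (with respect to $\Psi$) is dense in $Y$.
   Context: A probe function is an arbitrary function into $\mathbb{R}^n$; for $A \subseteq X$ write $\Phi(A) = \{\Phi(a) : a \in A\}$. Subsets $A, B \subseteq X$ are descriptively near, written $A \,\delta_{\Phi}\, B$, if $\Phi(A) \cap \Phi(B) \neq \emptyset$ (similarly $\delta_{\Psi}$ on $Y$). The map $h$ is descriptively continuous if $A \,\delta_{\Phi}\, B$ implies $h(A) \,\delta_{\Psi}\, h(B)$ for all $A, B \subseteq X$. An object $a \in X$ is a descriptive periodic object of $f$ if $\Phi(f^m(a)) = \Phi(a)$ for some integer $m \geq 1$; analogously $y \in Y$ is a descriptive periodic object of $g$ if $\Psi(g^m(y)) = \Psi(y)$ for some integer $m \geq 1$. *)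

theory Defs
  imports "HOL-Analysis.Analysis"
begin

definition desc_near :: "('a \<Rightarrow> 'v) \<Rightarrow> 'a set \<Rightarrow> 'a set \<Rightarrow> bool" where
  "desc_near \<Phi> A B \<longleftrightarrow> \<Phi> ` A \<inter> \<Phi> ` B \<noteq> {}"

definition desc_continuous ::
  "'a topology \<Rightarrow> ('a \<Rightarrow> 'v) \<Rightarrow> ('b \<Rightarrow> 'v) \<Rightarrow> ('a \<Rightarrow> 'b) \<Rightarrow> bool" where
  "desc_continuous X \<Phi> \<Psi> h \<longleftrightarrow>
     (\<forall>A B. A \<subseteq> topspace X \<and> B \<subseteq> topspace X \<and> desc_near \<Phi> A B
        \<longrightarrow> desc_near \<Psi> (h ` A) (h ` B))"

definition desc_periodic_objects ::
  "'a topology \<Rightarrow> ('a \<Rightarrow> 'a) \<Rightarrow> ('a \<Rightarrow> 'v) \<Rightarrow> 'a set" where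
  "desc_periodic_objects X f \<Phi> =
     {a \<in> topspace X. \<exists>m::nat. m \<ge> 1 \<and> \<Phi> ((f ^^ m) a) = \<Phi> a}"

definition dense_in :: "'a topology \<Rightarrow> 'a set \<Rightarrow> bool" where
  "dense_in X S \<longleftrightarrow> S \<subseteq> topspace X \<and> X closure_of S = topspace X"

end

theory Submission
  imports Defs
begin

text \<open>A point of period m for the descriptions under f is mapped by the semiconjugacy h to a point
  with h (f^m a) = g^m (h a); descriptive continuity applied to the singletons {f^m a} and {a}
  transfers the equality of descriptions to g. So h maps the descriptive periodic objects of f
  into those of g, and the continuous surjection h maps a dense set onto a dense set.\<close>

lemma funpow_in_topspace:
  assumes "f ` topspace X \<subseteq> topspace X" and "a \<in> topspace X"
  shows "(f ^^ m) a \<in> topspace X"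
  using assms by (induction m) auto

lemma funpow_semiconj:
  assumes "f ` topspace X \<subseteq> topspace X"
    and "\<And>x. x \<in> topspace X \<Longrightarrow> h (f x) = g (h x)"
    and "a \<in> topspace X"
  shows "h ((f ^^ m) a) = (g ^^ m) (h a)"
proof (induction m)
  case (Suc m)
  then show ?case
    using assms funpow_in_topspace[OF assms(1,3), of m] by simp
qed simp

lemma desc_continuous_eqD:
  assumes "desc_continuous X \<Phi> \<Psi> h" "a \<in> topspace X" "b \<in> topspace X" "\<Phi> a = \<Phi> b"
  shows "\<Psi> (h a) = \<Psi> (h b)"
proof -
  have "desc_near \<Phi> {a} {b}"
    using assms(4) by (simp add: desc_near_def)
  moreover have "{a} \<subseteq> topspace X" "{b} \<subseteq> topspace X"
    using assms(2,3) by auto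
  ultimately have "desc_near \<Psi> (h ` {a}) (h ` {b})"
    using assms(1) unfolding desc_continuous_def by metis
  then show ?thesis
    by (simp add: desc_near_def)
qed

lemma image_desc_periodic_objects_subset:
  assumes f_maps: "f ` topspace X \<subseteq> topspace X"
    and h_maps: "h ` topspace X \<subseteq> topspace Y"
    and h_comm: "\<And>x. x \<in> topspace X \<Longrightarrow> h (f x) = g (h x)"
    and h_desc: "desc_continuous X \<Phi> \<Psi> h"
  shows "h ` desc_periodic_objects X f \<Phi> \<subseteq> desc_periodic_objects Y g \<Psi>"
proof
  fix y
  assume "y \<in> h ` desc_periodic_objects X f \<Phi>"
  then obtain a m where a: "a \<in> topspace X" and m: "m \<ge> 1" "\<Phi> ((f ^^ m) a) = \<Phi> a"
    and y: "y = h a"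
    unfolding desc_periodic_objects_def by auto
  have "\<Psi> ((g ^^ m) (h a)) = \<Psi> (h ((f ^^ m) a))"
    using funpow_semiconj[where h = h and g = g, OF f_maps h_comm a] by simp
  also have "\<dots> = \<Psi> (h a)"
    using desc_continuous_eqD[OF h_desc funpow_in_topspace[OF f_maps a] a m(2)] .
  finally have "\<Psi> ((g ^^ m) y) = \<Psi> y"
    using y by simp
  moreover have "y \<in> topspace Y"
    using a h_maps y by blast
  ultimately show "y \<in> desc_periodic_objects Y g \<Psi>"
    using m(1) unfolding desc_periodic_objects_def by auto
qed

lemma dense_in_continuous_image:
  assumes "continuous_map X Y h" "h ` topspace X = topspace Y" "dense_in X S"
  shows "dense_in Y (h ` S)"
proof -
  have "topspace Y = h ` (X closure_of S)"
    using assms(2,3) by (simp add: dense_in_def)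
  also have "\<dots> \<subseteq> Y closure_of (h ` S)"
    using assms(1) by (rule continuous_map_image_closure_subset)
  finally have "topspace Y \<subseteq> Y closure_of (h ` S)" .
  moreover have "h ` S \<subseteq> topspace Y"
    using assms(2,3) unfolding dense_in_def by blast
  ultimately show ?thesis
    by (simp add: dense_in_def closure_of_subset_topspace subset_antisym)
qed

lemma dense_in_superset:
  assumes "dense_in X S" "S \<subseteq> T" "T \<subseteq> topspace X"
  shows "dense_in X T"
proof -
  have "topspace X \<subseteq> X closure_of T"
    using assms(1) closure_of_mono[OF assms(2), of X] by (simp add: dense_in_def)
  then show ?thesis
    using assms(3) by (simp add: dense_in_def closure_of_subset_topspace subset_antisym)
qed

theorem lemma4:
  fixes X :: "'a topology" and Y :: "'b topology"
    and f :: "'a \<Rightarrow> 'a" and g :: "'b \<Rightarrow> 'b" and h :: "'a \<Rightarrow> 'b"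
    and \<Phi> :: "'a \<Rightarrow> real ^ 'n" and \<Psi> :: "'b \<Rightarrow> real ^ 'n"
  assumes f_maps: "f ` topspace X \<subseteq> topspace X"
    and g_maps: "g ` topspace Y \<subseteq> topspace Y"
    and h_cont: "continuous_map X Y h"
    and h_surj: "h ` topspace X = topspace Y"
    and h_comm: "\<And>x. x \<in> topspace X \<Longrightarrow> h (f x) = g (h x)"
    and h_desc: "desc_continuous X \<Phi> \<Psi> h"
    and dense_f: "dense_in X (desc_periodic_objects X f \<Phi>)"
  shows "dense_in Y (desc_periodic_objects Y g \<Psi>)"
proof (rule dense_in_superset)
  show "dense_in Y (h ` desc_periodic_objects X f \<Phi>)"
    using h_cont h_surj dense_f by (rule dense_in_continuous_image)
  show "h ` desc_periodic_objects X f \<Phi> \<subseteq> desc_periodic_objects Y g \<Psi>"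
    using f_maps h_surj h_comm h_desc by (intro image_desc_periodic_objects_subset) auto
  show "desc_periodic_objects Y g \<Psi> \<subseteq> topspace Y"
    by (auto simp: desc_periodic_objects_def)
qed

end
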